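(* Let $F:\mathbb{R}\to\mathbb{R}$ and $G:\mathbb{R}\to(0,\infty)$ be measurable functions and fix a timestep $\Delta t>0$. Define the Euler–Maruyama transition density $$P(\xi\mid x)=\frac{1}{G(x)\sqrt{2\pi\Delta t}}\exp\!\left(\frac{-[\xi-x-F(x)\Delta t]^2}{2G(x)^2\Delta t}\right),\qquad \xi,x\in\mathbb{R},$$ i.e. the density of $\xi=x+F(x)\Delta t+G(x)\eta\sqrt{\Delta t}$ with $\eta\sim N(0,1)$. Suppose $\rho^*$ is a probability density on $\mathbb{R}$ which is an equilibrium of this step, i.e. $$\rho^*(\xi)=\int_{-\infty}^{\infty}P(\xi\mid x)\,\rho^*(x)\,dx\quad\text{for all }\xi\in\mathbb{R},$$ and suppose its second raw moment $\mu_2=\int_{-\infty}^{\infty}x^2\rho^*(x)\,dx$ is finite. Then $$0=\Delta t\int_{-\infty}^{\infty}\rho^*(x)\left[2xF(x)+G(x)^2\right]dx+\Delta t^2\int_{-\infty}^{\infty}\rho^*(x)\,F(x)^2\,dx .$$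
   Context: This is the Euler–Maruyama discretization with timestep $\Delta t$ of the autonomous Itô SDE $dx=F(x)\,dt+G(x)\,dW$; the equilibrium $\rho^*$ is a density left unchanged by one step of this discretization. *)

theory Defs
  imports "HOL-Analysis.Analysis"
begin

definition EM_density :: "(real \<Rightarrow> real) \<Rightarrow> (real \<Rightarrow> real) \<Rightarrow> real \<Rightarrow> real \<Rightarrow> real \<Rightarrow> real" where
  "EM_density F G dt \<xi> x =
     1 / (G x * sqrt (2 * pi * dt)) * exp (- ((\<xi> - x - F x * dt)\<^sup>2) / (2 * (G x)\<^sup>2 * dt))"

end

theory Submission
  imports Defs "HOL-Probability.Probability"
begin

text \<open>Given \<open>x\<close>, one Euler--Maruyama step produces a normal variable with mean
\<open>x + F x * dt\<close> and variance \<open>(G x)\<^sup>2 * dt\<close>, so its conditional second moment is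
\<open>(x + F x * dt)\<^sup>2 + (G x)\<^sup>2 * dt\<close>. Stationarity of \<open>\<rho>\<close> and Tonelli's theorem equate
\<open>\<mu>\<^sub>2\<close> with the \<open>\<rho>\<close>-average of this conditional moment; since \<open>\<mu>\<^sub>2\<close> is finite, the average
is finite too, which makes every term integrable, and subtracting \<open>\<mu>\<^sub>2\<close> leaves the identity.\<close>

lemma normal_density_second_moment:
  assumes "\<sigma> > 0"
  shows "has_bochner_integral lborel (\<lambda>x. normal_density \<mu> \<sigma> x * x\<^sup>2) (\<sigma>\<^sup>2 + \<mu>\<^sup>2)"
proof -
  have var: "has_bochner_integral lborel (\<lambda>x. normal_density \<mu> \<sigma> x * (x - \<mu>) ^ (2 * 1)) (\<sigma>\<^sup>2)"
    using normal_moment_even[OF assms, where k=1 and \<mu>=\<mu>] by simp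
  have mean: "has_bochner_integral lborel (\<lambda>x. normal_density \<mu> \<sigma> x * (x - \<mu>) ^ (2 * 0 + 1)) 0"
    using normal_moment_odd[OF assms, where k=0 and \<mu>=\<mu>] .
  have mass: "has_bochner_integral lborel (\<lambda>x. normal_density \<mu> \<sigma> x) 1"
    using normal_moment_even[OF assms, where k=0 and \<mu>=\<mu>] by simp
  have "has_bochner_integral lborel
      (\<lambda>x. normal_density \<mu> \<sigma> x * (x - \<mu>) ^ (2 * 1)
         + 2 * \<mu> * (normal_density \<mu> \<sigma> x * (x - \<mu>) ^ (2 * 0 + 1)) + \<mu>\<^sup>2 * normal_density \<mu> \<sigma> x)
      (\<sigma>\<^sup>2 + 2 * \<mu> * 0 + \<mu>\<^sup>2 * 1)"
    by (intro has_bochner_integral_add has_bochner_integral_mult_right var mean mass)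
  then show ?thesis
    by (simp add: power2_eq_square algebra_simps)
qed

lemma nn_integral_invariant_density:
  fixes K :: "'a \<Rightarrow> 'a \<Rightarrow> real" and \<rho> :: "'a \<Rightarrow> real" and g :: "'a \<Rightarrow> ennreal"
  assumes "sigma_finite_measure M"
    and K_meas: "(\<lambda>(\<xi>, x). K \<xi> x) \<in> borel_measurable (M \<Otimes>\<^sub>M M)"
    and K_nonneg: "\<And>\<xi> x. K \<xi> x \<ge> 0"
    and \<rho>_meas: "\<rho> \<in> borel_measurable M"
    and \<rho>_nonneg: "\<And>x. \<rho> x \<ge> 0"
    and g_meas: "g \<in> borel_measurable M"
    and invariant: "\<And>\<xi>. \<xi> \<in> space M \<Longrightarrow> ennreal (\<rho> \<xi>) = (\<integral>\<^sup>+ x. ennreal (K \<xi> x * \<rho> x) \<partial>M)"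
  shows "(\<integral>\<^sup>+ \<xi>. g \<xi> * \<rho> \<xi> \<partial>M) = (\<integral>\<^sup>+ x. \<rho> x * (\<integral>\<^sup>+ \<xi>. g \<xi> * K \<xi> x \<partial>M) \<partial>M)"
proof -
  interpret pair_sigma_finite M M
    using assms(1) by (simp add: pair_sigma_finite_def)
  note [measurable] = K_meas \<rho>_meas g_meas
  have "(\<integral>\<^sup>+ \<xi>. g \<xi> * \<rho> \<xi> \<partial>M) = (\<integral>\<^sup>+ \<xi>. (\<integral>\<^sup>+ x. g \<xi> * (K \<xi> x * \<rho> x) \<partial>M) \<partial>M)"
    by (intro nn_integral_cong) (simp add: invariant nn_integral_cmult)
  also have "\<dots> = (\<integral>\<^sup>+ x. (\<integral>\<^sup>+ \<xi>. g \<xi> * (K \<xi> x * \<rho> x) \<partial>M) \<partial>M)"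
    by (intro Fubini') measurable
  also have "\<dots> = (\<integral>\<^sup>+ x. \<rho> x * (\<integral>\<^sup>+ \<xi>. g \<xi> * K \<xi> x \<partial>M) \<partial>M)"
    by (intro nn_integral_cong)
      (simp add: nn_integral_cmult[symmetric] ennreal_mult K_nonneg \<rho>_nonneg ac_simps)
  finally show ?thesis .
qed

lemma integrable_weighted_square_diff:
  fixes f g w :: "'a \<Rightarrow> real"
  assumes f_int: "integrable M (\<lambda>x. w x * (f x)\<^sup>2)"
    and g_int: "integrable M (\<lambda>x. w x * (g x)\<^sup>2)"
    and w_nonneg: "\<And>x. w x \<ge> 0"
    and meas: "(\<lambda>x. w x * (f x - g x)\<^sup>2) \<in> borel_measurable M"
  shows "integrable M (\<lambda>x. w x * (f x - g x)\<^sup>2)"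
proof (rule Bochner_Integration.integrable_bound)
  show "integrable M (\<lambda>x. 2 * (w x * (f x)\<^sup>2) + 2 * (w x * (g x)\<^sup>2))"
    using f_int g_int by simp
  have "(f x - g x)\<^sup>2 \<le> 2 * (f x)\<^sup>2 + 2 * (g x)\<^sup>2" for x
    using zero_le_power2[of "f x + g x"] by (simp add: power2_eq_square algebra_simps)
  then have "w x * (f x - g x)\<^sup>2 \<le> w x * (2 * (f x)\<^sup>2 + 2 * (g x)\<^sup>2)" for x
    by (intro mult_left_mono w_nonneg)
  then show "AE x in M. norm (w x * (f x - g x)\<^sup>2)
      \<le> norm (2 * (w x * (f x)\<^sup>2) + 2 * (w x * (g x)\<^sup>2))"
    using w_nonneg by (simp add: algebra_simps)
qed (rule meas)

lemma integral_combination_eq_zero: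
  fixes f g :: "'a \<Rightarrow> real" and a b :: real
  assumes comb: "has_bochner_integral M (\<lambda>x. a * f x + b * g x) 0"
    and g_int: "integrable M g"
    and "a \<noteq> 0"
  shows "a * (\<integral>x. f x \<partial>M) + b * (\<integral>x. g x \<partial>M) = 0"
proof -
  have "integrable M (\<lambda>x. ((a * f x + b * g x) - b * g x) / a)"
    using integrable.intros[OF comb] g_int
    by (intro integrable_divide Bochner_Integration.integrable_diff) auto
  then have f_int: "integrable M f"
    using \<open>a \<noteq> 0\<close> by simp
  have "a * (\<integral>x. f x \<partial>M) + b * (\<integral>x. g x \<partial>M) = (\<integral>x. a * f x + b * g x \<partial>M)"
    using f_int g_int by simp
  also have "\<dots> = 0"
    using comb by (simp add: has_bochner_integral_iff)
  finally show ?thesis .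
qed

lemma EM_density_eq_normal_density:
  assumes "G x > 0" "dt > 0"
  shows "EM_density F G dt \<xi> x = normal_density (x + F x * dt) (G x * sqrt dt) \<xi>"
  using assms unfolding EM_density_def normal_density_def
  by (simp add: real_sqrt_mult algebra_simps)

lemma nn_integral_EM_density_second_moment:
  assumes "G x > 0" "dt > 0"
  shows "(\<integral>\<^sup>+ \<xi>. ennreal (\<xi>\<^sup>2) * ennreal (EM_density F G dt \<xi> x) \<partial>lborel)
       = ennreal ((x + F x * dt)\<^sup>2 + (G x)\<^sup>2 * dt)"
proof -
  have "has_bochner_integral lborel (\<lambda>\<xi>. normal_density (x + F x * dt) (G x * sqrt dt) \<xi> * \<xi>\<^sup>2)
      ((G x * sqrt dt)\<^sup>2 + (x + F x * dt)\<^sup>2)"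
    using assms by (intro normal_density_second_moment) simp
  then have "(\<integral>\<^sup>+ \<xi>. ennreal (normal_density (x + F x * dt) (G x * sqrt dt) \<xi> * \<xi>\<^sup>2) \<partial>lborel)
      = ennreal ((G x * sqrt dt)\<^sup>2 + (x + F x * dt)\<^sup>2)"
    by (simp add: has_bochner_integral_iff nn_integral_eq_integral)
  then show ?thesis
    using assms by (simp add: EM_density_eq_normal_density ennreal_mult'[symmetric]
        power_mult_distrib mult.commute add.commute)
qed

lemma EM_equilibrium_second_moment:
  fixes F G \<rho> :: "real \<Rightarrow> real" and dt :: real
  assumes F_meas: "F \<in> borel_measurable borel"
    and G_meas: "G \<in> borel_measurable borel"
    and G_pos: "\<And>x. G x > 0"
    and dt_pos: "dt > 0"
    and \<rho>_meas: "\<rho> \<in> borel_measurable borel"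
    and \<rho>_nonneg: "\<And>x. \<rho> x \<ge> 0"
    and equilibrium: "\<And>\<xi>. ennreal (\<rho> \<xi>) = (\<integral>\<^sup>+ x. ennreal (EM_density F G dt \<xi> x * \<rho> x) \<partial>lborel)"
    and moment2: "integrable lborel (\<lambda>x. x\<^sup>2 * \<rho> x)"
  shows "has_bochner_integral lborel (\<lambda>x. \<rho> x * ((x + F x * dt)\<^sup>2 + (G x)\<^sup>2 * dt))
           (\<integral>x. x\<^sup>2 * \<rho> x \<partial>lborel)"
proof (rule has_bochner_integral_nn_integral)
  have [measurable]: "F \<in> borel_measurable lborel" "G \<in> borel_measurable lborel"
      "\<rho> \<in> borel_measurable lborel"
    using F_meas G_meas \<rho>_meas by auto
  have EM_meas: "(\<lambda>(\<xi>, x). EM_density F G dt \<xi> x) \<in> borel_measurable (lborel \<Otimes>\<^sub>M lborel)"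
    unfolding EM_density_def by measurable
  have EM_nonneg: "EM_density F G dt \<xi> x \<ge> 0" for \<xi> x
    by (simp add: EM_density_eq_normal_density G_pos dt_pos)
  show "(\<lambda>x. \<rho> x * ((x + F x * dt)\<^sup>2 + (G x)\<^sup>2 * dt)) \<in> borel_measurable lborel"
    by measurable
  show "AE x in lborel. 0 \<le> \<rho> x * ((x + F x * dt)\<^sup>2 + (G x)\<^sup>2 * dt)"
    using \<rho>_nonneg dt_pos by simp
  show "0 \<le> (\<integral>x. x\<^sup>2 * \<rho> x \<partial>lborel)"
    using \<rho>_nonneg by simp
  have "ennreal (\<integral>x. x\<^sup>2 * \<rho> x \<partial>lborel) = (\<integral>\<^sup>+ \<xi>. ennreal (\<xi>\<^sup>2 * \<rho> \<xi>) \<partial>lborel)"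
    using \<rho>_nonneg by (intro nn_integral_eq_integral[OF moment2, symmetric]) simp
  also have "\<dots> = (\<integral>\<^sup>+ \<xi>. ennreal (\<xi>\<^sup>2) * \<rho> \<xi> \<partial>lborel)"
    using \<rho>_nonneg by (simp add: ennreal_mult)
  also have "\<dots> = (\<integral>\<^sup>+ x. \<rho> x * (\<integral>\<^sup>+ \<xi>. ennreal (\<xi>\<^sup>2) * EM_density F G dt \<xi> x \<partial>lborel) \<partial>lborel)"
    by (rule nn_integral_invariant_density[OF lborel.sigma_finite_measure_axioms EM_meas EM_nonneg])
      (use \<rho>_nonneg equilibrium in auto)
  also have "\<dots> = (\<integral>\<^sup>+ x. ennreal (\<rho> x * ((x + F x * dt)\<^sup>2 + (G x)\<^sup>2 * dt)) \<partial>lborel)"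
    using \<rho>_nonneg dt_pos
    by (simp add: nn_integral_EM_density_second_moment G_pos ennreal_mult)
  finally show "(\<integral>\<^sup>+ x. ennreal (\<rho> x * ((x + F x * dt)\<^sup>2 + (G x)\<^sup>2 * dt)) \<partial>lborel)
      = ennreal (\<integral>x. x\<^sup>2 * \<rho> x \<partial>lborel)" ..
qed

lemma EM_equilibrium_drift_square_integrable:
  fixes F G \<rho> :: "real \<Rightarrow> real" and dt :: real
  assumes F_meas: "F \<in> borel_measurable borel"
    and G_meas: "G \<in> borel_measurable borel"
    and G_pos: "\<And>x. G x > 0"
    and dt_pos: "dt > 0"
    and \<rho>_meas: "\<rho> \<in> borel_measurable borel"
    and \<rho>_nonneg: "\<And>x. \<rho> x \<ge> 0"
    and equilibrium: "\<And>\<xi>. ennreal (\<rho> \<xi>) = (\<integral>\<^sup>+ x. ennreal (EM_density F G dt \<xi> x * \<rho> x) \<partial>lborel)"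
    and moment2: "integrable lborel (\<lambda>x. x\<^sup>2 * \<rho> x)"
  shows "integrable lborel (\<lambda>x. \<rho> x * (F x)\<^sup>2)"
proof -
  have [measurable]: "F \<in> borel_measurable lborel" "G \<in> borel_measurable lborel"
      "\<rho> \<in> borel_measurable lborel"
    using F_meas G_meas \<rho>_meas by auto
  have drift_int: "integrable lborel (\<lambda>x. \<rho> x * (x + F x * dt)\<^sup>2)"
  proof (rule Bochner_Integration.integrable_bound)
    show "integrable lborel (\<lambda>x. \<rho> x * ((x + F x * dt)\<^sup>2 + (G x)\<^sup>2 * dt))"
      using EM_equilibrium_second_moment[OF assms] by (rule integrable.intros)
    show "AE x in lborel. norm (\<rho> x * (x + F x * dt)\<^sup>2)
        \<le> norm (\<rho> x * ((x + F x * dt)\<^sup>2 + (G x)\<^sup>2 * dt))"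
      using \<rho>_nonneg dt_pos by (simp add: mult_left_mono)
  qed measurable
  have "integrable lborel (\<lambda>x. \<rho> x * ((x + F x * dt) - x)\<^sup>2)"
    using drift_int moment2 \<rho>_nonneg
    by (intro integrable_weighted_square_diff) (simp_all add: mult.commute)
  then have "integrable lborel (\<lambda>x. \<rho> x * ((x + F x * dt) - x)\<^sup>2 / dt\<^sup>2)"
    by (rule integrable_divide)
  then show ?thesis
    using dt_pos by (simp add: power_mult_distrib)
qed

theorem mainTheorem1:
  fixes F G \<rho> :: "real \<Rightarrow> real" and dt :: real
  assumes F_meas: "F \<in> borel_measurable borel"
    and G_meas: "G \<in> borel_measurable borel"
    and G_pos: "\<And>x. G x > 0"
    and dt_pos: "dt > 0"
    and rho_meas: "\<rho> \<in> borel_measurable borel"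
    and rho_nonneg: "\<And>x. \<rho> x \<ge> 0"
    and rho_prob: "(\<integral>\<^sup>+ x. ennreal (\<rho> x) \<partial>lborel) = 1"
    and equilibrium: "\<And>\<xi>. ennreal (\<rho> \<xi>) = (\<integral>\<^sup>+ x. ennreal (EM_density F G dt \<xi> x * \<rho> x) \<partial>lborel)"
    and moment2: "integrable lborel (\<lambda>x. x\<^sup>2 * \<rho> x)"
  shows "0 = dt * (\<integral> x. \<rho> x * (2 * x * F x + (G x)\<^sup>2) \<partial>lborel)
             + dt\<^sup>2 * (\<integral> x. \<rho> x * (F x)\<^sup>2 \<partial>lborel)"
proof -
  note hyps = F_meas G_meas G_pos dt_pos rho_meas rho_nonneg equilibrium moment2
  have "has_bochner_integral lborel (\<lambda>x. \<rho> x * ((x + F x * dt)\<^sup>2 + (G x)\<^sup>2 * dt) - x\<^sup>2 * \<rho> x)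
      ((\<integral>x. x\<^sup>2 * \<rho> x \<partial>lborel) - (\<integral>x. x\<^sup>2 * \<rho> x \<partial>lborel))"
    using EM_equilibrium_second_moment[OF hyps] moment2
    by (intro has_bochner_integral_diff) (simp_all add: has_bochner_integral_iff)
  then have "has_bochner_integral lborel
      (\<lambda>x. dt * (\<rho> x * (2 * x * F x + (G x)\<^sup>2)) + dt\<^sup>2 * (\<rho> x * (F x)\<^sup>2)) 0"
    by (simp add: power2_eq_square algebra_simps)
  then have "dt * (\<integral> x. \<rho> x * (2 * x * F x + (G x)\<^sup>2) \<partial>lborel)
      + dt\<^sup>2 * (\<integral> x. \<rho> x * (F x)\<^sup>2 \<partial>lborel) = 0"
    using EM_equilibrium_drift_square_integrable[OF hyps] dt_pos
    by (intro integral_combination_eq_zero) auto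
  then show ?thesis ..
qed

end
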